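(* In the construction described in the context, $\sum_{i=1}^{t-1}p_G(C_i)\ge\Delta$.
   Context: The profit of $D\subseteq E$ is $p_G(D)=\mathrm{MST}(G\setminus D)-\mathrm{MST}(G)$, where $\mathrm{MST}(H)$ is the minimum spanning tree weight of $H$ w.r.t. $w$ and $\mathrm{MST}(H)=\infty$ if $H$ is disconnected. Setting: $G=(V,E)$ is a connected finite undirected graph (parallel edges allowed), $w:E\to\mathbb{R}_{\ge0}$ edge weights, $c:E\to\mathbb{R}_{>0}$ edge costs, $n=|V|$. For $S\subseteq V$, $C_G(S)=\{e\in E:|e\cap S|=1\}$ (complete cut; its edges cross it) and $C_G(S,W)=\{e\in C_G(S):w(e)<W\}$ (partial cut). $F\subseteq E$ is a set with $G'=G\setminus F=(V,E\setminus F)$ connected; $B=c(F)$ and $\Delta=\mathrm{MST}(G')-\mathrm{MST}(G)$. Construction: let $T$ be a minimum spanning tree of $G$ and $T\cap F=\{e_1,\dots,e_{t-1}\}$, with $t\ge2$. Removing these edges splits $T$ into components with vertex sets $A_1,\dots,A_t$ (a partition of $V$). Let $G'_{cc}$ be the multigraph with vertex set $V_{cc}=\{A_1,\dots,A_t\}$ having, for every edge $\{u,v\}\in E\setminus F$ with $u\in A_i$, $v\in A_j$, an edge between $A_i$ and $A_j$ of weight $w(\{u,v\})$ (identified with the original edge). Let $T'_{cc}$ be a minimum spanning tree of $G'_{cc}$, with edges $e'_1,\dots,e'_{t-1}$ indexed so that $w(e'_1)\le\dots\le w(e'_{t-1})$ (ties broken arbitrarily). For each $i$, deleting $e'_i,e'_{i+1},\dots,e'_{t-1}$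 from $T'_{cc}$ leaves a forest in which $e'_i$ joins two components $L_i,R_i\subseteq V_{cc}$. Counters $k(A)=0$ for all $A\in V_{cc}$ initially, and $k(S)=\max_{A\in S}k(A)$. For $i=1,\dots,t-1$ in order: set $X_i=L_i$ if $k(L_i)\le k(R_i)$, else $X_i=R_i$; then increase $k(A)$ by $1$ for every $A\in X_i$. Identifying a set of vertices of $G'_{cc}$ with the union of the corresponding vertex sets in $V$, define $C_i=C_G(X_i,w(e'_i))$. *)

theory Defs
  imports "HOL-Library.Extended_Real"
begin

text \<open>Multigraphs: vertex set V, edge set E (abstract edge identities, so parallel
edges are allowed), and an endpoint map ends :: 'e => 'v set.\<close>

definition adj :: "('e \<Rightarrow> 'v set) \<Rightarrow> 'e set \<Rightarrow> ('v \<times> 'v) set" where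
  "adj ends D = {(u,v). \<exists>e\<in>D. ends e = {u,v}}"

definition gconnected :: "'v set \<Rightarrow> ('e \<Rightarrow> 'v set) \<Rightarrow> 'e set \<Rightarrow> bool" where
  "gconnected V ends D \<longleftrightarrow> (\<forall>u\<in>V. \<forall>v\<in>V. (u,v) \<in> (adj ends D)\<^sup>*)"

definition gforest :: "('e \<Rightarrow> 'v set) \<Rightarrow> 'e set \<Rightarrow> bool" where
  "gforest ends T \<longleftrightarrow> (\<forall>e\<in>T. \<forall>u v. ends e = {u,v} \<longrightarrow> (u,v) \<notin> (adj ends (T - {e}))\<^sup>*)"

definition spanning_tree :: "'v set \<Rightarrow> ('e \<Rightarrow> 'v set) \<Rightarrow> 'e set \<Rightarrow> 'e set \<Rightarrow> bool" where
  "spanning_tree V ends D T \<longleftrightarrow> T \<subseteq> D \<and> gconnected V ends T \<and> gforest ends T"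

text \<open>Minimum spanning tree weight of (V, D); equals \<infinity> if (V, D) is disconnected
(no spanning tree exists, Inf of the empty set is \<infinity>).\<close>
definition mst :: "'v set \<Rightarrow> ('e \<Rightarrow> 'v set) \<Rightarrow> ('e \<Rightarrow> real) \<Rightarrow> 'e set \<Rightarrow> ereal" where
  "mst V ends w D = (INF T \<in> {T. spanning_tree V ends D T}. ereal (sum w T))"

definition profit :: "'v set \<Rightarrow> ('e \<Rightarrow> 'v set) \<Rightarrow> ('e \<Rightarrow> real) \<Rightarrow> 'e set \<Rightarrow> 'e set \<Rightarrow> ereal" where
  "profit V ends w E D = mst V ends w (E - D) - mst V ends w E"

definition partial_cut :: "('e \<Rightarrow> 'v set) \<Rightarrow> ('e \<Rightarrow> real) \<Rightarrow> 'e set \<Rightarrow> 'v set \<Rightarrow> real \<Rightarrow> 'e set" where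
  "partial_cut ends w E S W = {e \<in> E. card (ends e \<inter> S) = 1 \<and> w e < W}"

definition comp_of :: "'v set \<Rightarrow> ('e \<Rightarrow> 'v set) \<Rightarrow> 'e set \<Rightarrow> 'v \<Rightarrow> 'v set" where
  "comp_of V ends D x = {v \<in> V. (x,v) \<in> (adj ends D)\<^sup>*}"

definition setmax :: "('c \<Rightarrow> nat) \<Rightarrow> 'c set \<Rightarrow> nat" where
  "setmax k S = Max (k ` S)"

fun kcnt :: "(nat \<Rightarrow> 'c set) \<Rightarrow> (nat \<Rightarrow> 'c set) \<Rightarrow> nat \<Rightarrow> 'c \<Rightarrow> nat" where
  "kcnt L R 0 = (\<lambda>_. 0)"
| "kcnt L R (Suc i) =
     (let k = kcnt L R i;
          X = (if setmax k (L (Suc i)) \<le> setmax k (R (Suc i)) then L (Suc i) else R (Suc i))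
      in (\<lambda>A. k A + (if A \<in> X then 1 else 0)))"

definition Xsel :: "(nat \<Rightarrow> 'c set) \<Rightarrow> (nat \<Rightarrow> 'c set) \<Rightarrow> nat \<Rightarrow> 'c set" where
  "Xsel L R i = (let k = kcnt L R (i - 1) in
                   if setmax k (L i) \<le> setmax k (R i) then L i else R i)"

end

theory Submission
  imports Defs
begin

(* Contract the components A_1, ..., A_t of T - F.  In the contracted graph both T \<inter> F and
   T'_cc are spanning trees, and X_i is a union of components of the forest {e'_j | j < i}
   that e'_i crosses.  Inserting e'_1, e'_2, ... one at a time into T \<inter> F and applying the
   exchange property at each step matches every e'_i with a distinct edge f_i of T \<inter> F
   crossing X_i.  A spanning tree avoiding C_i must use an edge g crossing X_i with
   w(g) \<ge> w(e'_i), and swapping g for f_i gives a spanning subgraph of G; hence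
   p(C_i) \<ge> w(e'_i) - w(f_i).  Summing, the total profit is at least
   w(T'_cc) - w(T \<inter> F), which bounds Delta because (T - F) \<union> T'_cc spans G'. *)

definition crosses :: "('e \<Rightarrow> 'v set) \<Rightarrow> 'e \<Rightarrow> 'v set \<Rightarrow> bool" where
  "crosses en g S \<longleftrightarrow> (\<exists>c d. en g = {c,d} \<and> c \<in> S \<and> d \<notin> S)"

lemma crosses_iff:
  assumes "en g = {y,z}"
  shows "crosses en g S \<longleftrightarrow> (y \<in> S \<longleftrightarrow> z \<notin> S)"
  using assms unfolding crosses_def by (auto simp: doubleton_eq_iff)

lemma crosses_card: "crosses en g S \<Longrightarrow> card (en g \<inter> S) = 1"
  unfolding crosses_def by (auto simp: Int_insert_left)

lemma adjI: "e \<in> D \<Longrightarrow> en e = {u,v} \<Longrightarrow> (u,v) \<in> adj en D"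
  unfolding adj_def by auto

lemma sym_adj: "sym (adj en D)"
  unfolding adj_def sym_def by (auto simp: insert_commute)

lemma rtrancl_adj_sym: "(u,v) \<in> (adj en D)\<^sup>* \<Longrightarrow> (v,u) \<in> (adj en D)\<^sup>*"
  using sym_rtrancl[OF sym_adj] by (rule symD)

lemma rtrancl_adj_mono: "D \<subseteq> D' \<Longrightarrow> (u,v) \<in> (adj en D)\<^sup>* \<Longrightarrow> (u,v) \<in> (adj en D')\<^sup>*"
  by (rule rtrancl_mono[THEN subsetD]) (auto simp: adj_def)

lemma rtrancl_adj_endpoints:
  assumes "e \<in> D" "card (en e) = 2" "p \<in> en e" "q \<in> en e"
  shows "(p,q) \<in> (adj en D)\<^sup>*"
proof -
  obtain x y where "en e = {x,y}" using assms(2) by (auto simp: card_2_iff)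
  with assms have "p = q \<or> (p,q) \<in> adj en D"
    by (auto intro: adjI simp: insert_commute)
  then show ?thesis by auto
qed

lemma gconnected_mono: "gconnected U en D \<Longrightarrow> D \<subseteq> D' \<Longrightarrow> gconnected U en D'"
  unfolding gconnected_def using rtrancl_adj_mono[where en=en and D=D and D'=D'] by blast

lemma gconnected_from_root:
  assumes "\<forall>u\<in>U. (r,u) \<in> (adj en D)\<^sup>*"
  shows "gconnected U en D"
  unfolding gconnected_def using assms by (meson rtrancl_adj_sym rtrancl_trans)

lemma rtrancl_adj_crossing:
  assumes "(u,v) \<in> (adj en M)\<^sup>*" "u \<in> A" "v \<notin> A"
  shows "\<exists>g\<in>M. crosses en g A"
  using assms
proof (induction rule: rtrancl_induct)
  case (step y z)
  then obtain e where e: "e \<in> M" "en e = {y,z}" unfolding adj_def by auto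
  show ?case
  proof (cases "y \<in> A")
    case True
    with e step.prems(2) have "crosses en e A" by (simp add: crosses_iff)
    with e(1) show ?thesis by blast
  qed (use step in auto)
qed simp

lemma rtrancl_adj_uncrossed:
  assumes "(u,v) \<in> (adj en {e\<in>M. \<not> crosses en e A})\<^sup>*"
  shows "u \<in> A \<longleftrightarrow> v \<in> A"
  using rtrancl_adj_crossing[OF assms] rtrancl_adj_crossing[OF rtrancl_adj_sym[OF assms]] by blast

lemma rtrancl_adj_remove_edge:
  assumes "(x,z) \<in> (adj en M)\<^sup>*" "en g = {c,d}"
  shows "(x,z) \<in> (adj en (M-{g}))\<^sup>* \<or> (c,z) \<in> (adj en (M-{g}))\<^sup>* \<or> (d,z) \<in> (adj en (M-{g}))\<^sup>*"
  using assms(1)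
proof (induction rule: rtrancl_induct)
  case (step y z)
  then obtain e where e: "e \<in> M" "en e = {y,z}" unfolding adj_def by auto
  show ?case
  proof (cases "e = g")
    case True
    with e assms(2) show ?thesis by auto
  next
    case False
    with e have "(y,z) \<in> adj en (M-{g})" by (auto intro: adjI)
    with step.IH show ?thesis by (meson rtrancl.rtrancl_into_rtrancl)
  qed
qed simp

text \<open>The component K of b avoiding S-crossing edges lies outside S; the component A of a
  avoiding K-crossing edges misses K.  An edge g leaving A enters K and must cross S; after
  deleting it, a still reaches its A-end and b its K-end.\<close>
lemma gconnected_exchange:
  assumes conn: "gconnected U en M" and f: "en f = {a,b}"
    and ab: "a \<in> U" "b \<in> U" "a \<in> S" "b \<notin> S"
  obtains g where "g \<in> M" "crosses en g S" "gconnected U en (insert f (M - {g}))"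
proof -
  define N where "N = {e\<in>M. \<not> crosses en e S}"
  define K where "K = {z. (b,z) \<in> (adj en N)\<^sup>*}"
  define N' where "N' = {e\<in>M. \<not> crosses en e K}"
  define A where "A = {z. (a,z) \<in> (adj en N')\<^sup>*}"
  have aK: "a \<notin> K"
    using rtrancl_adj_uncrossed[of b a en M S] ab unfolding K_def N_def by auto
  have bA: "b \<notin> A"
    using rtrancl_adj_uncrossed[of a b en M K] aK unfolding A_def N'_def K_def by auto
  have "(a,b) \<in> (adj en M)\<^sup>*" using conn ab unfolding gconnected_def by blast
  then obtain g where g: "g \<in> M" "crosses en g A"
    using rtrancl_adj_crossing[of a b en M A] bA unfolding A_def by auto
  then obtain x y where xy: "en g = {x,y}" "x \<in> A" "y \<notin> A" unfolding crosses_def by blast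
  have "g \<notin> N'"
    using xy adjI[of g N' en x y] unfolding A_def by (auto intro: rtrancl_into_rtrancl)
  moreover have "x \<notin> K"
    using rtrancl_adj_uncrossed[of a x en M K] xy(2) aK unfolding A_def N'_def by auto
  ultimately have yK: "y \<in> K" using g(1) xy(1) unfolding N'_def by (auto simp: crosses_iff)
  have "g \<notin> N"
    using \<open>x \<notin> K\<close> yK xy(1) adjI[of g N en y x] unfolding K_def
    by (auto simp: insert_commute intro: rtrancl_into_rtrancl)
  then have gS: "crosses en g S" using g(1) unfolding N_def by auto
  define M' where "M' = insert f (M - {g})"
  have "N \<subseteq> M'" using gS unfolding N_def M'_def by auto
  with yK have b_y: "(b,y) \<in> (adj en M')\<^sup>*" unfolding K_def by (simp add: rtrancl_adj_mono)
  have "N' \<subseteq> M'" using \<open>g \<notin> N'\<close> unfolding N'_def M'_def by auto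
  with xy(2) have a_x: "(a,x) \<in> (adj en M')\<^sup>*" unfolding A_def by (simp add: rtrancl_adj_mono)
  have "(a,b) \<in> adj en M'" using f by (auto simp: M'_def intro: adjI)
  then have a_y: "(a,y) \<in> (adj en M')\<^sup>*" using b_y by (rule converse_rtrancl_into_rtrancl)
  have M_g: "M - {g} \<subseteq> M'" unfolding M'_def by auto
  have "(a,z) \<in> (adj en M')\<^sup>*" if "z \<in> U" for z
  proof -
    have "(a,z) \<in> (adj en M)\<^sup>*" using conn ab(1) that unfolding gconnected_def by blast
    from rtrancl_adj_remove_edge[OF this xy(1)] a_x a_y show ?thesis
      by (meson rtrancl_adj_mono[OF M_g] rtrancl_trans)
  qed
  then have "gconnected U en M'" by (blast intro: gconnected_from_root)
  with g(1) gS show ?thesis unfolding M'_def by (rule that)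
qed

lemma rtrancl_adj_Diff_redundant:
  assumes "en e = {u,v}" "(u,v) \<in> (adj en (D - {e}))\<^sup>*"
  shows "(adj en D)\<^sup>* \<subseteq> (adj en (D - {e}))\<^sup>*"
proof (rule rtrancl_subset_rtrancl, rule subsetI)
  fix p assume "p \<in> adj en D"
  then obtain x y e' where p: "p = (x,y)" "e' \<in> D" "en e' = {x,y}" unfolding adj_def by auto
  show "p \<in> (adj en (D - {e}))\<^sup>*"
  proof (cases "e' = e")
    case True
    with assms p show ?thesis by (auto simp: doubleton_eq_iff dest: rtrancl_adj_sym)
  next
    case False
    with p show ?thesis by (auto intro: adjI)
  qed
qed

text \<open>A connected edge set of minimum cardinality is a forest.\<close>
lemma spanning_tree_exists:
  assumes "finite D" "gconnected V en D"
  obtains T where "spanning_tree V en D T"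
proof -
  define C where "C = {D'. D' \<subseteq> D \<and> gconnected V en D'}"
  obtain T where T: "T \<in> C" and min: "\<And>D'. D' \<in> C \<Longrightarrow> card T \<le> card D'"
    using ex_has_least_nat[of "\<lambda>X. X \<in> C" D card] assms(2) unfolding C_def by auto
  have "finite T" using T assms(1) finite_subset unfolding C_def by blast
  have "gforest en T"
    unfolding gforest_def
  proof (intro ballI allI impI notI)
    fix e u v assume e: "e \<in> T" "en e = {u,v}" "(u,v) \<in> (adj en (T - {e}))\<^sup>*"
    with T have "T - {e} \<in> C"
      using rtrancl_adj_Diff_redundant[OF e(2,3)] unfolding C_def gconnected_def by blast
    with min have "card T \<le> card (T - {e})" by blast
    with card_Diff1_less[OF \<open>finite T\<close> e(1)] show False by linarith
  qed
  with T show ?thesis using that unfolding C_def spanning_tree_def by blast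
qed

lemma mst_le_sum:
  assumes "finite D" "D \<subseteq> E" "gconnected V en D" "\<forall>e\<in>D. 0 \<le> w e"
  shows "mst V en w E \<le> ereal (sum w D)"
proof -
  obtain T where "spanning_tree V en D T" using spanning_tree_exists[OF assms(1,3)] .
  then have T: "T \<subseteq> D" "spanning_tree V en E T" using assms(2) unfolding spanning_tree_def by auto
  then have "mst V en w E \<le> ereal (sum w T)" unfolding mst_def by (auto intro: INF_lower)
  also have "sum w T \<le> sum w D" using assms(1,4) T(1) by (intro sum_mono2) auto
  finally show ?thesis by simp
qed

text \<open>Every spanning tree avoiding the partial cut contains an S-crossing edge g of weight at
  least W; exchanging g for f yields a spanning subgraph of G, which weighs at least w(T).\<close>
lemma mst_Diff_partial_cut_ge:
  assumes finE: "finite E" and ends_in: "\<forall>e\<in>E. en e \<subseteq> V" and wpos: "\<forall>e\<in>E. 0 \<le> w e"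
    and T: "spanning_tree V en E T" "ereal (sum w T) = mst V en w E"
    and f: "f \<in> T" "crosses en f S"
  shows "ereal (sum w T + W - w f) \<le> mst V en w (E - partial_cut en w E S W)"
  unfolding mst_def
proof (rule INF_greatest)
  let ?C = "partial_cut en w E S W"
  fix T' assume "T' \<in> {T'. spanning_tree V en (E - ?C) T'}"
  then have T': "T' \<subseteq> E - ?C" "gconnected V en T'" unfolding spanning_tree_def by auto
  obtain a b where ab: "en f = {a,b}" "a \<in> S" "b \<notin> S" using f(2) unfolding crosses_def by blast
  have fE: "f \<in> E" using T(1) f(1) unfolding spanning_tree_def by auto
  with ends_in ab(1) have "a \<in> V" "b \<in> V" by auto
  obtain g where g: "g \<in> T'" "crosses en g S"
    and conn: "gconnected V en (insert f (T' - {g}))"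
    by (rule gconnected_exchange[OF T'(2) ab(1) \<open>a \<in> V\<close> \<open>b \<in> V\<close> ab(2,3)])
  have "W \<le> w g" using g T'(1) crosses_card[OF g(2)] unfolding partial_cut_def by auto
  have "finite T'" using T'(1) finE finite_subset by blast
  have "insert f (T' - {g}) \<subseteq> E" using T'(1) fE by auto
  with \<open>finite T'\<close> conn wpos have "mst V en w E \<le> ereal (sum w (insert f (T' - {g})))"
    by (intro mst_le_sum) auto
  then have "ereal (sum w T) \<le> ereal (sum w (insert f (T' - {g})))" unfolding T(2) .
  then have "sum w T \<le> sum w (insert f (T' - {g}))" by simp
  also have "\<dots> \<le> w f + sum w (T' - {g})"
    using \<open>finite T'\<close> wpos fE by (cases "f \<in> T' - {g}") (auto simp: insert_absorb)
  also have "\<dots> = w f + sum w T' - w g" using \<open>finite T'\<close> g(1) by (simp add: sum_diff1)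
  finally have "sum w T + W - w f \<le> sum w T'" using \<open>W \<le> w g\<close> by linarith
  then show "ereal (sum w T + W - w f) \<le> ereal (sum w T')" by simp
qed

lemma sum_profit_partial_cuts_ge:
  assumes finE: "finite E" and ends_in: "\<forall>e\<in>E. en e \<subseteq> V" and wpos: "\<forall>e\<in>E. 0 \<le> w e"
    and T: "spanning_tree V en E T" "ereal (sum w T) = mst V en w E"
    and \<sigma>: "inj_on \<sigma> I" "\<sigma> ` I \<subseteq> T" "\<forall>i\<in>I. crosses en (\<sigma> i) (S i)"
  shows "ereal ((\<Sum>i\<in>I. W i) - sum w (\<sigma> ` I))
    \<le> (\<Sum>i\<in>I. profit V en w E (partial_cut en w E (S i) (W i)))"
proof -
  have "ereal (W i - w (\<sigma> i)) \<le> profit V en w E (partial_cut en w E (S i) (W i))" if "i \<in> I" for i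
  proof -
    have "ereal (W i - w (\<sigma> i)) = ereal (sum w T + W i - w (\<sigma> i)) - mst V en w E"
      using T(2)[symmetric] by simp
    also have "\<dots> \<le> mst V en w (E - partial_cut en w E (S i) (W i)) - mst V en w E"
      using mst_Diff_partial_cut_ge[OF finE ends_in wpos T] \<sigma> that
      by (intro ereal_minus_mono) auto
    finally show ?thesis unfolding profit_def .
  qed
  then have "(\<Sum>i\<in>I. ereal (W i - w (\<sigma> i)))
      \<le> (\<Sum>i\<in>I. profit V en w E (partial_cut en w E (S i) (W i)))"
    by (rule sum_mono)
  moreover have "(\<Sum>i\<in>I. ereal (W i - w (\<sigma> i))) = ereal ((\<Sum>i\<in>I. W i) - sum w (\<sigma> ` I))"
    by (simp add: sum_subtractf sum.reindex[OF \<sigma>(1)])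
  ultimately show ?thesis by simp
qed

lemma comp_of_subset: "comp_of U en D x \<subseteq> U"
  unfolding comp_of_def by auto

lemma comp_of_self: "x \<in> V \<Longrightarrow> x \<in> comp_of V en H x"
  unfolding comp_of_def by simp

lemma comp_of_eq: "y \<in> comp_of V en H x \<Longrightarrow> comp_of V en H y = comp_of V en H x"
  unfolding comp_of_def by (auto dest: rtrancl_adj_sym intro: rtrancl_trans)

lemma comp_of_not_crossed:
  assumes "e \<in> D" "en e \<subseteq> U"
  shows "\<not> crosses en e (comp_of U en D x)"
proof
  assume "crosses en e (comp_of U en D x)"
  then obtain c d where cd: "en e = {c,d}" "c \<in> comp_of U en D x" "d \<notin> comp_of U en D x"
    unfolding crosses_def by blast
  have "(c,d) \<in> adj en D" using assms(1) cd(1) by (rule adjI)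
  with cd(2) assms(2) have "d \<in> comp_of U en D x"
    unfolding comp_of_def using cd(1) by (auto intro: rtrancl_into_rtrancl)
  with cd(3) show False ..
qed

lemma gforest_comp_of_crossing:
  assumes "gforest en T" "e \<in> T" "en e = {a,b}" "a \<in> U" "D \<subseteq> T - {e}"
  shows "crosses en e (comp_of U en D a)"
proof -
  have "(a,b) \<notin> (adj en (T - {e}))\<^sup>*" using assms(1-3) unfolding gforest_def by blast
  then have "b \<notin> comp_of U en D a"
    using rtrancl_adj_mono[OF assms(5), of a b en] unfolding comp_of_def by blast
  with assms(3,4) show ?thesis unfolding crosses_def by (blast intro: comp_of_self)
qed

lemma mem_Union_contracted:
  assumes "x \<in> V" "X \<subseteq> comp_of V en H ` V"
  shows "x \<in> \<Union>X \<longleftrightarrow> comp_of V en H x \<in> X"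
  using assms comp_of_eq comp_of_self by fastforce

lemma crosses_contracted:
  assumes "en f \<subseteq> V" "card (en f) = 2" "X \<subseteq> comp_of V en H ` V"
  shows "crosses (\<lambda>e. comp_of V en H ` en e) f X \<longleftrightarrow> crosses en f (\<Union>X)"
proof -
  obtain u v where uv: "en f = {u,v}" using assms(2) unfolding card_2_iff by blast
  with assms(1) have "u \<in> V" "v \<in> V" by auto
  have endc: "(\<lambda>e. comp_of V en H ` en e) f = {comp_of V en H u, comp_of V en H v}"
    using uv by simp
  show ?thesis
    by (simp only: crosses_iff[of en f u v, OF uv]
        crosses_iff[of "\<lambda>e. comp_of V en H ` en e" f, OF endc]
        mem_Union_contracted[OF \<open>u \<in> V\<close> assms(3)] mem_Union_contracted[OF \<open>v \<in> V\<close> assms(3)])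
qed

lemma gconnected_contract:
  assumes conn: "gconnected V en D" and ends_in: "\<forall>e\<in>D. en e \<subseteq> V"
  shows "gconnected (comp_of V en H ` V) (\<lambda>e. comp_of V en H ` en e) (D - H)"
proof -
  let ?cmp = "comp_of V en H"
  have "(?cmp u, ?cmp z) \<in> (adj (\<lambda>e. ?cmp ` en e) (D - H))\<^sup>*"
    if "(u,z) \<in> (adj en D)\<^sup>*" for u z
    using that
  proof (induction rule: rtrancl_induct)
    case (step y z)
    then obtain e where e: "e \<in> D" "en e = {y,z}" unfolding adj_def by auto
    show ?case
    proof (cases "e \<in> H")
      case True
      with e ends_in have "z \<in> ?cmp y" unfolding comp_of_def by (auto intro: adjI)
      with step.IH show ?thesis by (simp add: comp_of_eq)
    next
      case False
      with e have "(?cmp y, ?cmp z) \<in> adj (\<lambda>e. ?cmp ` en e) (D - H)" by (auto intro: adjI)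
      with step.IH show ?thesis by (rule rtrancl_into_rtrancl)
    qed
  qed simp
  with conn show ?thesis unfolding gconnected_def by blast
qed

lemma gconnected_uncontract:
  assumes conn: "gconnected (comp_of V en H ` V) (\<lambda>e. comp_of V en H ` en e) D"
    and ends_in: "\<forall>e\<in>D. en e \<subseteq> V \<and> card (en e) = 2"
  shows "gconnected V en (H \<union> D)"
proof -
  let ?cmp = "comp_of V en H"
  have comp_reach: "(x,y) \<in> (adj en (H \<union> D))\<^sup>*" if "y \<in> ?cmp x" for x y
    using that rtrancl_adj_mono[of H "H \<union> D"] unfolding comp_of_def by auto
  have reach: "B \<subseteq> {y. (u,y) \<in> (adj en (H \<union> D))\<^sup>*}"
    if "(?cmp u, B) \<in> (adj (\<lambda>e. ?cmp ` en e) D)\<^sup>*" for u B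
    using that
  proof (induction rule: rtrancl_induct)
    case (step B B')
    then obtain e where e: "e \<in> D" "?cmp ` en e = {B,B'}" unfolding adj_def by auto
    then obtain p q where pq: "p \<in> en e" "?cmp p = B" "q \<in> en e" "?cmp q = B'"
      by (metis imageE insertI1 insertI2)
    with e(1) ends_in have "p \<in> B" by (auto intro: comp_of_self)
    with step.IH have "(u,p) \<in> (adj en (H \<union> D))\<^sup>*" by auto
    moreover have "(p,q) \<in> (adj en (H \<union> D))\<^sup>*"
      using rtrancl_adj_endpoints[of e "H \<union> D" en p q] e(1) ends_in pq(1,3) by auto
    ultimately have uq: "(u,q) \<in> (adj en (H \<union> D))\<^sup>*" by (rule rtrancl_trans)
    show ?case
    proof
      fix y assume "y \<in> B'"
      with pq(4) comp_reach have "(q,y) \<in> (adj en (H \<union> D))\<^sup>*" by blast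
      from rtrancl_trans[OF uq this] show "y \<in> {y. (u,y) \<in> (adj en (H \<union> D))\<^sup>*}" by simp
    qed
  qed (auto intro: comp_reach)
  show ?thesis
    unfolding gconnected_def
  proof (intro ballI)
    fix u v assume "u \<in> V" "v \<in> V"
    with conn have "(?cmp u, ?cmp v) \<in> (adj (\<lambda>e. ?cmp ` en e) D)\<^sup>*"
      unfolding gconnected_def by blast
    with reach comp_of_self[OF \<open>v \<in> V\<close>] show "(u,v) \<in> (adj en (H \<union> D))\<^sup>*" by blast
  qed
qed

text \<open>Edges es 1, ..., es n are inserted one at a time; es i trades itself against an edge
  of D crossing X i by the exchange lemma, which stays available because the earlier es j
  do not cross X i.\<close>
lemma crossing_matching:
  fixes es :: "nat \<Rightarrow> 'e" and X :: "nat \<Rightarrow> 'v set"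
  assumes conn: "gconnected U en D"
    and ends_in: "\<forall>i\<in>{1..n}. en (es i) \<subseteq> U"
    and cross: "\<forall>i\<in>{1..n}. crosses en (es i) (X i) \<and> (\<forall>j\<in>{1..<i}. \<not> crosses en (es j) (X i))"
  shows "\<exists>\<sigma>. inj_on \<sigma> {1..n} \<and> \<sigma> ` {1..n} \<subseteq> D \<and> (\<forall>i\<in>{1..n}. crosses en (\<sigma> i) (X i))"
proof -
  have "k \<le> n \<Longrightarrow> \<exists>\<sigma>. inj_on \<sigma> {1..k} \<and> \<sigma> ` {1..k} \<subseteq> D \<and> (\<forall>i\<in>{1..k}. crosses en (\<sigma> i) (X i))
      \<and> gconnected U en ((D - \<sigma> ` {1..k}) \<union> es ` {1..k})" for k
  proof (induction k)
    case 0
    with conn show ?case by simp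
  next
    case (Suc k)
    then obtain \<sigma> where \<sigma>: "inj_on \<sigma> {1..k}" "\<sigma> ` {1..k} \<subseteq> D"
      "\<forall>i\<in>{1..k}. crosses en (\<sigma> i) (X i)" "gconnected U en ((D - \<sigma> ` {1..k}) \<union> es ` {1..k})"
      by auto
    have k: "Suc k \<in> {1..n}" using Suc.prems by simp
    then obtain a b where ab: "en (es (Suc k)) = {a,b}" "a \<in> X (Suc k)" "b \<notin> X (Suc k)"
      using cross unfolding crosses_def by blast
    moreover have "en (es (Suc k)) \<subseteq> U" using ends_in k by blast
    ultimately have "a \<in> U" "b \<in> U" by auto
    obtain g where g: "g \<in> (D - \<sigma> ` {1..k}) \<union> es ` {1..k}" "crosses en g (X (Suc k))"
      and conn': "gconnected U en (insert (es (Suc k)) (((D - \<sigma> ` {1..k}) \<union> es ` {1..k}) - {g}))"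
      by (rule gconnected_exchange[OF \<sigma>(4) ab(1) \<open>a \<in> U\<close> \<open>b \<in> U\<close> ab(2,3)])
    have "g \<notin> es ` {1..k}" using cross k g(2) by auto
    with g(1) have gD: "g \<in> D" "g \<notin> \<sigma> ` {1..k}" by auto
    have img: "(\<sigma>(Suc k := g)) ` {1..k} = \<sigma> ` {1..k}" by (intro image_cong) auto
    have Suc_k: "{1..Suc k} = insert (Suc k) {1..k}" by (simp add: atLeastAtMostSuc_conv)
    have "inj_on (\<sigma>(Suc k := g)) {1..k}"
      using \<sigma>(1) by (rule inj_on_cong[THEN iffD1, rotated]) auto
    with gD(2) img have "inj_on (\<sigma>(Suc k := g)) {1..Suc k}" unfolding Suc_k by simp
    moreover have "(\<sigma>(Suc k := g)) ` {1..Suc k} \<subseteq> D"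
      using \<sigma>(2) gD(1) unfolding Suc_k image_insert img by simp
    moreover have "\<forall>i\<in>{1..Suc k}. crosses en ((\<sigma>(Suc k := g)) i) (X i)"
      using \<sigma>(3) g(2) unfolding Suc_k by simp
    moreover have "gconnected U en ((D - (\<sigma>(Suc k := g)) ` {1..Suc k}) \<union> es ` {1..Suc k})"
      by (rule gconnected_mono[OF conn']) (auto simp: Suc_k img)
    ultimately show ?case by blast
  qed
  then show ?thesis by blast
qed

lemma Xsel_crossing:
  assumes forest: "gforest en Tc" and bij: "bij_betw es {1..n} Tc"
    and ends_in: "\<forall>e\<in>Tc. en e \<subseteq> U"
    and LR: "\<forall>i\<in>{1..n}. \<exists>a b. en (es i) = {a,b} \<and>
      L i = comp_of U en (es ` {1..<i}) a \<and> R i = comp_of U en (es ` {1..<i}) b"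
  shows "\<forall>i\<in>{1..n}. crosses en (es i) (Xsel L R i) \<and>
    (\<forall>j\<in>{1..<i}. \<not> crosses en (es j) (Xsel L R i))"
proof
  fix i assume i: "i \<in> {1..n}"
  obtain a b where ab: "en (es i) = {a,b}"
    "L i = comp_of U en (es ` {1..<i}) a" "R i = comp_of U en (es ` {1..<i}) b"
    using LR i by blast
  have es_i: "es i \<in> Tc" using bij i by (auto simp: bij_betw_def)
  with ends_in ab(1) have "a \<in> U" "b \<in> U" by auto
  have earlier: "es ` {1..<i} \<subseteq> Tc - {es i}"
    using bij i by (auto simp: bij_betw_def inj_on_eq_iff)
  have "crosses en (es i) (L i)" "crosses en (es i) (R i)"
    using gforest_comp_of_crossing[OF forest es_i _ _ earlier] ab \<open>a \<in> U\<close> \<open>b \<in> U\<close>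
    by (auto simp: insert_commute)
  moreover have "\<not> crosses en (es j) (L i)" "\<not> crosses en (es j) (R i)" if "j \<in> {1..<i}" for j
  proof -
    have "es j \<in> Tc" using bij i that by (auto simp: bij_betw_def)
    with ends_in have "\<not> crosses en (es j) (comp_of U en (es ` {1..<i}) x)" for x
      using that by (intro comp_of_not_crossed) auto
    then show "\<not> crosses en (es j) (L i)" "\<not> crosses en (es j) (R i)" unfolding ab(2,3) by blast+
  qed
  moreover have "Xsel L R i = L i \<or> Xsel L R i = R i" by (simp add: Xsel_def Let_def)
  ultimately show "crosses en (es i) (Xsel L R i) \<and> (\<forall>j\<in>{1..<i}. \<not> crosses en (es j) (Xsel L R i))"
    by auto
qed

lemma Xsel_subset:
  assumes "\<forall>i\<in>{1..n}. \<exists>a b. en (es i) = {a,b} \<and>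
      L i = comp_of U en (es ` {1..<i}) a \<and> R i = comp_of U en (es ` {1..<i}) b"
  shows "\<forall>i\<in>{1..n}. Xsel L R i \<subseteq> U"
proof
  fix i assume "i \<in> {1..n}"
  with assms obtain a b where "en (es i) = {a,b}"
    "L i = comp_of U en (es ` {1..<i}) a" "R i = comp_of U en (es ` {1..<i}) b"
    by blast
  then show "Xsel L R i \<subseteq> U" by (simp add: Xsel_def Let_def comp_of_subset)
qed

lemma mst_le_contracted_spanning_tree:
  assumes finE: "finite E" and edges: "\<forall>e\<in>E. en e \<subseteq> V \<and> card (en e) = 2"
    and wpos: "\<forall>e\<in>E. 0 \<le> w e" and "H \<subseteq> E'" "E' \<subseteq> E"
    and Tc: "spanning_tree (comp_of V en H ` V) (\<lambda>e. comp_of V en H ` en e) E' Tc"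
  shows "mst V en w E' \<le> ereal (sum w H + sum w Tc)"
proof -
  have Tc': "Tc \<subseteq> E'" "gconnected (comp_of V en H ` V) (\<lambda>e. comp_of V en H ` en e) Tc"
    using Tc unfolding spanning_tree_def by auto
  have "finite E'" using assms(5) finE by (rule finite_subset)
  then have fin: "finite H" "finite Tc" using assms(4) Tc'(1) by (auto intro: finite_subset)
  have "gconnected V en (H \<union> Tc)"
    by (rule gconnected_uncontract[OF Tc'(2)]) (use Tc'(1) assms(5) edges in auto)
  then have "mst V en w E' \<le> ereal (sum w (H \<union> Tc))"
    by (rule mst_le_sum[rotated 2]) (use fin assms(4,5) Tc'(1) wpos in auto)
  also have "\<dots> \<le> ereal (sum w H + sum w Tc)"
  proof -
    have "0 \<le> sum w (H \<inter> Tc)" using assms(4,5) wpos by (intro sum_nonneg) auto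
    with fin show ?thesis by (simp add: sum_Un)
  qed
  finally show ?thesis .
qed

lemma mst_increase_le:
  assumes finE: "finite E" and edges: "\<forall>e\<in>E. en e \<subseteq> V \<and> card (en e) = 2"
    and wpos: "\<forall>e\<in>E. 0 \<le> w e"
    and T: "spanning_tree V en E T" "ereal (sum w T) = mst V en w E"
    and Tc: "spanning_tree (comp_of V en (T - F) ` V) (\<lambda>e. comp_of V en (T - F) ` en e) (E - F) Tc"
  shows "mst V en w (E - F) - mst V en w E \<le> ereal (sum w Tc - sum w (T \<inter> F))"
proof -
  have "T \<subseteq> E" using T(1) unfolding spanning_tree_def by auto
  then have "mst V en w (E - F) \<le> ereal (sum w (T - F) + sum w Tc)"
    by (intro mst_le_contracted_spanning_tree[OF finE edges wpos _ _ Tc]) auto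
  moreover have "sum w T = sum w (T \<inter> F) + sum w (T - F)"
    using finite_subset[OF \<open>T \<subseteq> E\<close> finE] by (rule sum.Int_Diff)
  ultimately have "mst V en w (E - F) - ereal (sum w T)
      \<le> ereal (sum w T - sum w (T \<inter> F) + sum w Tc) - ereal (sum w T)"
    by (intro ereal_minus_mono) simp_all
  then show ?thesis unfolding T(2)[symmetric] by simp
qed

lemma Xsel_matching:
  fixes es :: "nat \<Rightarrow> 'e" and L R :: "nat \<Rightarrow> 'v set set"
  assumes edges: "\<forall>e\<in>E. en e \<subseteq> V \<and> card (en e) = 2"
    and T: "spanning_tree V en E T"
    and Tc: "spanning_tree (comp_of V en (T - F) ` V) (\<lambda>e. comp_of V en (T - F) ` en e) (E - F) Tc"
    and es_bij: "bij_betw es {1..n} Tc"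
    and LR: "\<forall>i\<in>{1..n}. \<exists>a b. comp_of V en (T - F) ` en (es i) = {a, b} \<and>
      L i = comp_of (comp_of V en (T - F) ` V) (\<lambda>e. comp_of V en (T - F) ` en e) (es ` {1..<i}) a \<and>
      R i = comp_of (comp_of V en (T - F) ` V) (\<lambda>e. comp_of V en (T - F) ` en e) (es ` {1..<i}) b"
  obtains \<sigma> where "inj_on \<sigma> {1..n}" "\<sigma> ` {1..n} \<subseteq> T \<inter> F"
    "\<forall>i\<in>{1..n}. crosses en (\<sigma> i) (\<Union> (Xsel L R i))"
proof -
  let ?cmp = "comp_of V en (T - F)"
  let ?endc = "\<lambda>e. ?cmp ` en e"
  have TE: "T \<subseteq> E" and T_conn: "gconnected V en T"
    using T unfolding spanning_tree_def by auto
  have TcE: "Tc \<subseteq> E - F" and Tc_forest: "gforest ?endc Tc"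
    using Tc unfolding spanning_tree_def by auto
  have endc_in: "\<forall>e\<in>Tc. ?endc e \<subseteq> ?cmp ` V" using TcE edges by blast
  have "\<forall>e\<in>T. en e \<subseteq> V" using edges TE by blast
  from gconnected_contract[OF T_conn this, of "T - F"]
  have TF_conn: "gconnected (?cmp ` V) ?endc (T \<inter> F)" by (simp add: Diff_Diff_Int)
  have "\<forall>i\<in>{1..n}. ?endc (es i) \<subseteq> ?cmp ` V" using es_bij endc_in by (auto simp: bij_betw_def)
  from crossing_matching[OF TF_conn this Xsel_crossing[OF Tc_forest es_bij endc_in LR]]
  obtain \<sigma> where \<sigma>: "inj_on \<sigma> {1..n}" "\<sigma> ` {1..n} \<subseteq> T \<inter> F"
    "\<forall>i\<in>{1..n}. crosses ?endc (\<sigma> i) (Xsel L R i)"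
    by blast
  have "crosses en (\<sigma> i) (\<Union> (Xsel L R i))" if i: "i \<in> {1..n}" for i
  proof -
    from i \<sigma>(2) TE have "\<sigma> i \<in> E" by blast
    with edges have "en (\<sigma> i) \<subseteq> V" "card (en (\<sigma> i)) = 2" by auto
    moreover have "Xsel L R i \<subseteq> ?cmp ` V" using Xsel_subset[OF LR] i by blast
    ultimately have "crosses ?endc (\<sigma> i) (Xsel L R i) \<longleftrightarrow> crosses en (\<sigma> i) (\<Union> (Xsel L R i))"
      by (rule crosses_contracted)
    with \<sigma>(3) i show ?thesis by simp
  qed
  with \<sigma>(1,2) show ?thesis using that by blast
qed

theorem mainTheorem14:
  fixes V :: "'v set" and E :: "'e set" and ends :: "'e \<Rightarrow> 'v set"
    and w :: "'e \<Rightarrow> real" and F T Tcc :: "'e set" and t :: nat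
    and es :: "nat \<Rightarrow> 'e" and L R :: "nat \<Rightarrow> 'v set set"
  assumes finV: "finite V" and finE: "finite E"
    and edges: "\<forall>e\<in>E. ends e \<subseteq> V \<and> card (ends e) = 2"
    and wpos: "\<forall>e\<in>E. w e \<ge> 0"
    and Gconn: "gconnected V ends E"
    and FE: "F \<subseteq> E"
    and G'conn: "gconnected V ends (E - F)"
    and Tmst: "spanning_tree V ends E T" "ereal (sum w T) = mst V ends w E"
    and tdef: "card (T \<inter> F) = t - 1" and t2: "t \<ge> 2"
    and Tccmst: "spanning_tree (comp_of V ends (T - F) ` V)
                   (\<lambda>e. comp_of V ends (T - F) ` ends e) (E - F) Tcc"
      "ereal (sum w Tcc) = mst (comp_of V ends (T - F) ` V)
                   (\<lambda>e. comp_of V ends (T - F) ` ends e) w (E - F)"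
    and es_bij: "bij_betw es {1..t-1} Tcc"
    and es_sorted: "\<forall>i j. 1 \<le> i \<and> i \<le> j \<and> j \<le> t - 1 \<longrightarrow> w (es i) \<le> w (es j)"
    and LR: "\<forall>i\<in>{1..t-1}. \<exists>a b.
               comp_of V ends (T - F) ` ends (es i) = {a, b} \<and>
               L i = comp_of (comp_of V ends (T - F) ` V)
                       (\<lambda>e. comp_of V ends (T - F) ` ends e) (es ` {1..<i}) a \<and>
               R i = comp_of (comp_of V ends (T - F) ` V)
                       (\<lambda>e. comp_of V ends (T - F) ` ends e) (es ` {1..<i}) b"
  shows "(\<Sum>i\<in>{1..t-1}. profit V ends w E
            (partial_cut ends w E (\<Union> (Xsel L R i)) (w (es i))))
         \<ge> mst V ends w (E - F) - mst V ends w E"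
proof -
  let ?I = "{1..t-1}"
  have ends_in: "\<forall>e\<in>E. ends e \<subseteq> V" using edges by blast
  obtain \<sigma> where \<sigma>: "inj_on \<sigma> ?I" "\<sigma> ` ?I \<subseteq> T \<inter> F"
    and cross: "\<forall>i\<in>?I. crosses ends (\<sigma> i) (\<Union> (Xsel L R i))"
    using Xsel_matching[OF edges Tmst(1) Tccmst(1) es_bij LR] .
  then have "\<sigma> ` ?I \<subseteq> T" by blast
  note profits = sum_profit_partial_cuts_ge[OF finE ends_in wpos Tmst \<sigma>(1) this cross,
      of "\<lambda>i. w (es i)", unfolded sum.reindex_bij_betw[OF es_bij, of w]]
  have "T \<subseteq> E" using Tmst(1) unfolding spanning_tree_def by auto
  with \<sigma>(2) finE wpos have "sum w (\<sigma> ` ?I) \<le> sum w (T \<inter> F)"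
    by (intro sum_mono2) (auto intro: finite_subset)
  then have "ereal (sum w Tcc - sum w (T \<inter> F)) \<le> ereal (sum w Tcc - sum w (\<sigma> ` ?I))" by simp
  with mst_increase_le[OF finE edges wpos Tmst Tccmst(1)] profits show ?thesis
    by (meson order_trans)
qed

end
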